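(* Let $A$ be a T-brace whose additive group is torsion-free. If $A$ is $\star$-hypercentral, then $A$ is abelian (i.e. $a\star b=0$, equivalently $ab=a+b$, for all $a,b\in A$).
   Context: A (left) brace is a set $A$ with two operations $+$ and $\cdot$ such that $(A,+)$ is an abelian group, $(A,\cdot)$ is a group, and $a(b+c)=ab+ac-a$ for all $a,b,c\in A$. Put $a\star b=ab-a-b$. A subbrace is a subset which is a subgroup of both $(A,+)$ and $(A,\cdot)$; a subbrace $L$ is an ideal if $a\star z, z\star a\in L$ for all $a\in A$, $z\in L$, and then the quotient brace $A/L$ is defined. $A$ is a T-brace if whenever $I$ is an ideal of $J$ and $J$ is an ideal of $A$, then $I$ is an ideal of $A$. The $\star$-center is $\zeta(\star,A)=\{a\in A: a\star x=x\star a=0 \ \forall x\in A\}$. The upper $\star$-central series: $\zeta_0(\star,A)=0$, $\zeta_{\alpha+1}(\star,A)/\zeta_\alpha(\star,A)=\zeta(\star,A/\zeta_\alpha(\star,A))$, unions at limit ordinals; its last term is $\zeta_\infty(\star,A)$. $A$ is $\star$-hypercentral if $A=\zeta_\infty(\star,A)$. *)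

theory Defs
  imports "HOL-Algebra.Group"
begin

text \<open>A (left) brace is given by two HOL-Algebra structures on the same carrier:
  G is the additive group (its "mult" is the brace addition +),
  M is the multiplicative group (its "mult" is the brace product).\<close>

definition brace :: "'a monoid \<Rightarrow> 'a monoid \<Rightarrow> bool" where
  "brace G M \<longleftrightarrow> comm_group G \<and> group M \<and> carrier M = carrier G \<and>
     (\<forall>a\<in>carrier G. \<forall>b\<in>carrier G. \<forall>c\<in>carrier G.
        a \<otimes>\<^bsub>M\<^esub> (b \<otimes>\<^bsub>G\<^esub> c)
          = ((a \<otimes>\<^bsub>M\<^esub> b) \<otimes>\<^bsub>G\<^esub> (a \<otimes>\<^bsub>M\<^esub> c)) \<otimes>\<^bsub>G\<^esub> inv\<^bsub>G\<^esub> a)"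

definition star :: "'a monoid \<Rightarrow> 'a monoid \<Rightarrow> 'a \<Rightarrow> 'a \<Rightarrow> 'a" where
  "star G M a b = ((a \<otimes>\<^bsub>M\<^esub> b) \<otimes>\<^bsub>G\<^esub> inv\<^bsub>G\<^esub> a) \<otimes>\<^bsub>G\<^esub> inv\<^bsub>G\<^esub> b"

definition subbrace :: "'a monoid \<Rightarrow> 'a monoid \<Rightarrow> 'a set \<Rightarrow> bool" where
  "subbrace G M L \<longleftrightarrow> subgroup L G \<and> subgroup L M"

text \<open>I is an ideal of the subbrace J (with the operations restricted to J;
  subgroups and \<star> of J are computed with the same operations).\<close>
definition ideal_of :: "'a monoid \<Rightarrow> 'a monoid \<Rightarrow> 'a set \<Rightarrow> 'a set \<Rightarrow> bool" where
  "ideal_of G M J I \<longleftrightarrow> subbrace G M I \<and> I \<subseteq> J \<and>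
     (\<forall>a\<in>J. \<forall>z\<in>I. star G M a z \<in> I \<and> star G M z a \<in> I)"

definition brace_ideal :: "'a monoid \<Rightarrow> 'a monoid \<Rightarrow> 'a set \<Rightarrow> bool" where
  "brace_ideal G M L \<longleftrightarrow> ideal_of G M (carrier G) L"

definition T_brace :: "'a monoid \<Rightarrow> 'a monoid \<Rightarrow> bool" where
  "T_brace G M \<longleftrightarrow> brace G M \<and>
     (\<forall>I J. ideal_of G M J I \<and> brace_ideal G M J \<longrightarrow> brace_ideal G M I)"

definition torsion_free_add :: "'a monoid \<Rightarrow> bool" where
  "torsion_free_add G \<longleftrightarrow>
     (\<forall>a\<in>carrier G. \<forall>n::nat. n > 0 \<and> a [^]\<^bsub>G\<^esub> n = \<one>\<^bsub>G\<^esub> \<longrightarrow> a = \<one>\<^bsub>G\<^esub>)"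

text \<open>The last term \<zeta>_\<infinity> of the upper \<star>-central series. Since
  a + \<zeta>_\<alpha> lies in \<zeta>(\<star>, A/\<zeta>_\<alpha>) iff a\<star>x and x\<star>a lie in \<zeta>_\<alpha> for all x,
  the transfinite series (starting at 0, unions at limits) is the increasing
  iteration of this operator, and its final term is the least set containing 0
  and closed under it.\<close>
inductive_set zeta_inf :: "'a monoid \<Rightarrow> 'a monoid \<Rightarrow> 'a set" for G M where
  zero: "\<one>\<^bsub>G\<^esub> \<in> zeta_inf G M"
| step: "a \<in> carrier G \<Longrightarrow>
          \<forall>x\<in>carrier G. star G M a x \<in> zeta_inf G M \<and> star G M x a \<in> zeta_inf G M
          \<Longrightarrow> a \<in> zeta_inf G M"

definition star_hypercentral :: "'a monoid \<Rightarrow> 'a monoid \<Rightarrow> bool" where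
  "star_hypercentral G M \<longleftrightarrow> zeta_inf G M = carrier G"

end

theory Submission
  imports Defs "HOL-Algebra.Generated_Groups"
begin

text \<open>
  Let \<zeta> = \<zeta>(\<star>, A) and let \<zeta>_2 be the set of a with a \<star> x, x \<star> a \<in> \<zeta> for all x.
  It suffices to show \<zeta>_2 = \<zeta>, since then the upper \<star>-central series stops at \<zeta>.
  Every map x \<mapsto> y \<star> x is additive, and b \<mapsto> b \<star> y is additive on the subgroup \<zeta>_2.
  For a \<in> \<zeta>_2 this makes J = \<int>a + \<zeta> an ideal of A and I = \<int>a + \<int>(a \<star> a) an ideal
  of J, so by the T-property I is an ideal of A and contains every x \<star> a and a \<star> x.
  If some nonzero multiple ka is in \<zeta>, then k(x \<star> a) = x \<star> ka = 0 and
  k(a \<star> x) = ka \<star> x = 0, and torsion-freeness gives a \<in> \<zeta>.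
  Otherwise I \<inter> \<zeta> = \<int>(a \<star> a). Applied to 2a instead of a, this puts
  a \<star> 2a = 2(a \<star> a) into \<int>(2a \<star> 2a) = \<int>4(a \<star> a), which forces a \<star> a = 0; then
  x \<star> a and a \<star> x lie in I \<inter> \<zeta> = 0.
\<close>

lemma torsion_free_int_pow_eq_one:
  fixes G :: "'a monoid"
  assumes "group G" and "torsion_free_add G" and x: "x \<in> carrier G"
    and k: "k \<noteq> 0" and "x [^]\<^bsub>G\<^esub> (k::int) = \<one>\<^bsub>G\<^esub>"
  shows "x = \<one>\<^bsub>G\<^esub>"
proof -
  have "x [^]\<^bsub>G\<^esub> nat \<bar>k\<bar> = \<one>\<^bsub>G\<^esub>"
    using assms(5) group.int_pow_neg[OF assms(1) x, of k] pow_nat[of "\<bar>k\<bar>" G x]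
      monoid.inv_one[OF group.is_monoid[OF assms(1)]]
    by (cases "k \<ge> 0") auto
  moreover have "nat \<bar>k\<bar> > 0"
    using k by simp
  ultimately show ?thesis
    using assms(2) x unfolding torsion_free_add_def by blast
qed

locale left_brace =
  fixes G M :: "'a monoid"
  assumes brace: "brace G M"
begin

sublocale G: comm_group G
  using brace unfolding brace_def by auto

sublocale M: group M
  using brace unfolding brace_def by auto

abbreviation badd (infixl "\<oplus>" 65) where "x \<oplus> y \<equiv> x \<otimes>\<^bsub>G\<^esub> y"
abbreviation bneg ("\<ominus> _" [81] 80) where "\<ominus> x \<equiv> inv\<^bsub>G\<^esub> x"
abbreviation bmult (infixl "\<odot>" 70) where "x \<odot> y \<equiv> x \<otimes>\<^bsub>M\<^esub> y"
abbreviation bstar (infixl "\<star>" 75) where "x \<star> y \<equiv> star G M x y"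
abbreviation bzero ("\<zero>") where "\<zero> \<equiv> \<one>\<^bsub>G\<^esub>"

lemma carrier_M [simp]: "carrier M = carrier G"
  using brace unfolding brace_def by auto

lemma mult_closed [simp]: "\<lbrakk>a \<in> carrier G; b \<in> carrier G\<rbrakk> \<Longrightarrow> a \<odot> b \<in> carrier G"
  using M.m_closed by simp

lemma mult_add_distrib:
  assumes "a \<in> carrier G" "b \<in> carrier G" "c \<in> carrier G"
  shows "a \<odot> (b \<oplus> c) \<oplus> a = a \<odot> b \<oplus> a \<odot> c"
  using brace assms unfolding brace_def by (simp add: G.m_assoc)

lemma star_closed [simp]: "\<lbrakk>a \<in> carrier G; b \<in> carrier G\<rbrakk> \<Longrightarrow> a \<star> b \<in> carrier G"
  by (simp add: star_def)

lemma star_eq_iff: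
  assumes "a \<in> carrier G" "b \<in> carrier G" "s \<in> carrier G"
  shows "a \<star> b = s \<longleftrightarrow> a \<odot> b = s \<oplus> a \<oplus> b"
proof -
  have "a \<star> b = s \<longleftrightarrow> a \<odot> b = s \<oplus> b \<oplus> a"
    using assms by (simp add: star_def G.inv_solve_right')
  also have "s \<oplus> b \<oplus> a = s \<oplus> a \<oplus> b"
    using assms by (simp add: G.m_ac)
  finally show ?thesis .
qed

lemma mult_eq_star_add: "\<lbrakk>a \<in> carrier G; b \<in> carrier G\<rbrakk> \<Longrightarrow> a \<odot> b = a \<star> b \<oplus> a \<oplus> b"
  using star_eq_iff[of a b "a \<star> b"] by simp

lemma mult_zero_right [simp]: "a \<in> carrier G \<Longrightarrow> a \<odot> \<zero> = a"
  using mult_add_distrib[of a \<zero> \<zero>] by simp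

lemma one_M [simp]: "\<one>\<^bsub>M\<^esub> = \<zero>"
  using mult_zero_right[of "\<one>\<^bsub>M\<^esub>"] M.l_one[of \<zero>] M.one_closed by simp

lemma star_zero_left [simp]: "x \<in> carrier G \<Longrightarrow> \<zero> \<star> x = \<zero>"
  using M.l_one[of x] by (simp add: star_eq_iff)

lemma star_add_right:
  assumes x: "x \<in> carrier G" and b: "b \<in> carrier G" and c: "c \<in> carrier G"
  shows "x \<star> (b \<oplus> c) = x \<star> b \<oplus> x \<star> c"
proof -
  have "x \<odot> (b \<oplus> c) \<oplus> x = x \<odot> b \<oplus> x \<odot> c"
    using assms by (rule mult_add_distrib)
  also have "\<dots> = (x \<star> b \<oplus> x \<star> c \<oplus> x \<oplus> (b \<oplus> c)) \<oplus> x"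
    using assms by (simp add: mult_eq_star_add G.m_ac)
  finally show ?thesis
    using assms by (simp add: star_eq_iff)
qed

lemma group_hom_star_right: "x \<in> carrier G \<Longrightarrow> group_hom G G (\<lambda>b. x \<star> b)"
  by (intro group_hom.intro group_hom_axioms.intro G.is_group) (auto simp: hom_def star_add_right)

lemma star_zero_right [simp]: "x \<in> carrier G \<Longrightarrow> x \<star> \<zero> = \<zero>"
  using group_hom.hom_one[OF group_hom_star_right] by simp

lemma star_inv_right: "\<lbrakk>x \<in> carrier G; b \<in> carrier G\<rbrakk> \<Longrightarrow> x \<star> (\<ominus> b) = \<ominus> (x \<star> b)"
  using group_hom.hom_inv[OF group_hom_star_right] by simp

lemma star_int_pow_right:
  "\<lbrakk>x \<in> carrier G; b \<in> carrier G\<rbrakk> \<Longrightarrow> x \<star> (b [^]\<^bsub>G\<^esub> (n::int)) = (x \<star> b) [^]\<^bsub>G\<^esub> n"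
  using group_hom.hom_int_pow[OF group_hom_star_right] by simp

lemma star_mult_left:
  assumes b: "b \<in> carrier G" and c: "c \<in> carrier G" and y: "y \<in> carrier G"
  shows "(b \<odot> c) \<star> y = b \<star> (c \<star> y) \<oplus> c \<star> y \<oplus> b \<star> y"
proof -
  have "(b \<odot> c) \<odot> y \<oplus> b \<oplus> b = b \<odot> (c \<star> y \<oplus> (c \<oplus> y)) \<oplus> b \<oplus> b"
    using assms by (simp add: M.m_assoc mult_eq_star_add[of c y] G.m_assoc)
  also have "\<dots> = b \<odot> (c \<star> y) \<oplus> (b \<odot> (c \<oplus> y) \<oplus> b)"
    using assms mult_add_distrib[of b "c \<star> y" "c \<oplus> y"] by (simp add: G.m_assoc)
  also have "\<dots> = b \<odot> (c \<star> y) \<oplus> (b \<odot> c \<oplus> b \<odot> y)"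
    using assms by (simp add: mult_add_distrib)
  also have "\<dots> = (b \<star> (c \<star> y) \<oplus> c \<star> y \<oplus> b \<star> y) \<oplus> b \<odot> c \<oplus> y \<oplus> b \<oplus> b"
    using assms by (simp add: mult_eq_star_add[of b "c \<star> y"] mult_eq_star_add[of b y] G.m_ac)
  finally show ?thesis
    using assms by (simp add: star_eq_iff)
qed

definition star_center :: "'a set" where
  "star_center = {z \<in> carrier G. \<forall>x\<in>carrier G. z \<star> x = \<zero> \<and> x \<star> z = \<zero>}"

lemma star_centerI:
  "\<lbrakk>z \<in> carrier G; \<And>x. x \<in> carrier G \<Longrightarrow> z \<star> x = \<zero> \<and> x \<star> z = \<zero>\<rbrakk> \<Longrightarrow> z \<in> star_center"
  by (simp add: star_center_def)

lemma star_center_carrier: "z \<in> star_center \<Longrightarrow> z \<in> carrier G"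
  by (simp add: star_center_def)

lemma star_center_star [simp]:
  "\<lbrakk>z \<in> star_center; x \<in> carrier G\<rbrakk> \<Longrightarrow> z \<star> x = \<zero>"
  "\<lbrakk>z \<in> star_center; x \<in> carrier G\<rbrakk> \<Longrightarrow> x \<star> z = \<zero>"
  by (simp_all add: star_center_def)

lemma mult_star_center:
  "\<lbrakk>z \<in> star_center; x \<in> carrier G\<rbrakk> \<Longrightarrow> z \<odot> x = z \<oplus> x"
  "\<lbrakk>z \<in> star_center; x \<in> carrier G\<rbrakk> \<Longrightarrow> x \<odot> z = x \<oplus> z"
  using star_center_carrier by (simp_all add: mult_eq_star_add)

lemma mult_add_star_center:
  assumes z: "z \<in> star_center" and x: "x \<in> carrier G" and y: "y \<in> carrier G"
  shows "x \<odot> (y \<oplus> z) = x \<odot> y \<oplus> z"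
proof -
  note zG = star_center_carrier[OF z]
  have "x \<odot> (y \<oplus> z) \<oplus> x = x \<odot> y \<oplus> (x \<oplus> z)"
    using assms zG mult_add_distrib[of x y z] by (simp add: mult_star_center)
  also have "\<dots> = (x \<odot> y \<oplus> z) \<oplus> x"
    using assms zG by (simp add: G.m_ac)
  finally show ?thesis
    using assms zG by simp
qed

lemma add_star_center_mult:
  assumes z: "z \<in> star_center" and x: "x \<in> carrier G" and y: "y \<in> carrier G"
  shows "(y \<oplus> z) \<odot> x = y \<odot> x \<oplus> z"
proof -
  note zG = star_center_carrier[OF z]
  have "(y \<oplus> z) \<odot> x = (y \<odot> z) \<odot> x"
    using mult_star_center(2)[OF z y] by simp
  also have "\<dots> = y \<odot> (z \<odot> x)"
    using assms zG by (simp add: M.m_assoc)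
  also have "\<dots> = y \<odot> (x \<oplus> z)"
    using assms zG by (simp add: mult_star_center G.m_comm[of z x])
  finally show ?thesis
    using assms by (simp add: mult_add_star_center)
qed

lemma star_add_star_center:
  assumes z: "z \<in> star_center" and x: "x \<in> carrier G" and y: "y \<in> carrier G"
  shows "(x \<oplus> z) \<star> y = x \<star> y"
proof -
  note zG = star_center_carrier[OF z]
  have "(x \<oplus> z) \<odot> y = (x \<star> y \<oplus> x \<oplus> y) \<oplus> z"
    using assms zG add_star_center_mult[OF z y x] mult_eq_star_add[of x y] by simp
  also have "\<dots> = x \<star> y \<oplus> (x \<oplus> z) \<oplus> y"
    using assms zG by (simp add: G.m_ac)
  finally show ?thesis
    using star_eq_iff[of "x \<oplus> z" y "x \<star> y"] assms zG by simp
qed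

lemma subgroup_star_center: "subgroup star_center G"
proof (rule G.subgroupI)
  show "star_center \<subseteq> carrier G"
    using star_center_carrier by blast
  have "\<zero> \<in> star_center"
    by (rule star_centerI) simp_all
  then show "star_center \<noteq> {}"
    by blast
next
  fix z assume z: "z \<in> star_center"
  note zG = star_center_carrier[OF z]
  show "\<ominus> z \<in> star_center"
  proof (rule star_centerI)
    fix x assume x: "x \<in> carrier G"
    show "(\<ominus> z) \<star> x = \<zero> \<and> x \<star> (\<ominus> z) = \<zero>"
      using star_add_star_center[OF z, of "\<ominus> z" x, symmetric] z zG x by (simp add: star_inv_right)
  qed (use zG in simp)
next
  fix z w assume z: "z \<in> star_center" and w: "w \<in> star_center"
  note zG = star_center_carrier[OF z] and wG = star_center_carrier[OF w]
  show "z \<oplus> w \<in> star_center"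
  proof (rule star_centerI)
    fix x assume x: "x \<in> carrier G"
    show "(z \<oplus> w) \<star> x = \<zero> \<and> x \<star> (z \<oplus> w) = \<zero>"
      using star_add_star_center[OF w, of z x] z w zG wG x by (simp add: star_add_right)
  qed (use zG wG in simp)
qed

definition second_star_center :: "'a set" where
  "second_star_center =
     {a \<in> carrier G. \<forall>x\<in>carrier G. a \<star> x \<in> star_center \<and> x \<star> a \<in> star_center}"

lemma second_star_center_carrier: "a \<in> second_star_center \<Longrightarrow> a \<in> carrier G"
  by (simp add: second_star_center_def)

lemma second_star_center_star:
  "\<lbrakk>a \<in> second_star_center; x \<in> carrier G\<rbrakk> \<Longrightarrow> a \<star> x \<in> star_center"
  "\<lbrakk>a \<in> second_star_center; x \<in> carrier G\<rbrakk> \<Longrightarrow> x \<star> a \<in> star_center"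
  by (simp_all add: second_star_center_def)

lemma star_mult_left_second_star_center:
  assumes c: "c \<in> second_star_center" and b: "b \<in> carrier G" and y: "y \<in> carrier G"
  shows "(b \<odot> c) \<star> y = b \<star> y \<oplus> c \<star> y"
  using assms second_star_center_carrier[OF c] second_star_center_star[OF c]
  by (simp add: star_mult_left G.m_comm)

lemma star_add_left_second_star_center:
  assumes b: "b \<in> second_star_center" and c: "c \<in> second_star_center" and y: "y \<in> carrier G"
  shows "(b \<oplus> c) \<star> y = b \<star> y \<oplus> c \<star> y"
proof -
  note bG = second_star_center_carrier[OF b] and cG = second_star_center_carrier[OF c]
  have "(b \<oplus> c) \<star> y = ((b \<oplus> c) \<oplus> b \<star> c) \<star> y"
    using assms bG cG second_star_center_star(1)[OF b cG] by (simp add: star_add_star_center)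
  also have "(b \<oplus> c) \<oplus> b \<star> c = b \<odot> c"
    using bG cG by (simp add: mult_eq_star_add G.m_ac)
  finally show ?thesis
    using assms bG by (simp add: star_mult_left_second_star_center)
qed

lemma star_inv_left_second_star_center:
  assumes b: "b \<in> second_star_center" and y: "y \<in> carrier G"
  shows "(\<ominus> b) \<star> y = \<ominus> (b \<star> y)"
proof -
  note bG = second_star_center_carrier[OF b]
  have "(\<ominus> b) \<odot> b = (\<ominus> b) \<star> b"
    using bG by (simp add: mult_eq_star_add G.m_assoc)
  then have "(\<ominus> b) \<star> y \<oplus> b \<star> y = \<zero>"
    using assms bG second_star_center_star(2)[OF b, of "\<ominus> b"]
      star_mult_left_second_star_center[OF b, of "\<ominus> b" y]
    by simp
  then show ?thesis
    using bG y by (metis G.inv_closed G.inv_equality star_closed)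
qed

lemma subgroup_second_star_center: "subgroup second_star_center G"
proof (rule G.subgroupI)
  show "second_star_center \<subseteq> carrier G"
    by (auto simp: second_star_center_def)
  show "second_star_center \<noteq> {}"
    using subgroup.one_closed[OF subgroup_star_center] by (auto simp: second_star_center_def)
next
  fix b assume b: "b \<in> second_star_center"
  note bG = second_star_center_carrier[OF b]
  have "(\<ominus> b) \<star> x \<in> star_center \<and> x \<star> (\<ominus> b) \<in> star_center" if x: "x \<in> carrier G" for x
    using subgroup.m_inv_closed[OF subgroup_star_center] second_star_center_star[OF b] bG x
    by (simp add: star_inv_left_second_star_center[OF b x] star_inv_right)
  then show "\<ominus> b \<in> second_star_center"
    using G.inv_closed[OF bG] unfolding second_star_center_def by blast
next
  fix b c assume b: "b \<in> second_star_center" and c: "c \<in> second_star_center"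
  note bG = second_star_center_carrier[OF b] and cG = second_star_center_carrier[OF c]
  have "(b \<oplus> c) \<star> x \<in> star_center \<and> x \<star> (b \<oplus> c) \<in> star_center" if x: "x \<in> carrier G" for x
    using subgroup.m_closed[OF subgroup_star_center] second_star_center_star[OF b]
      second_star_center_star[OF c] bG cG x
    by (simp add: star_add_left_second_star_center[OF b c x] star_add_right)
  then show "b \<oplus> c \<in> second_star_center"
    using G.m_closed[OF bG cG] unfolding second_star_center_def by blast
qed

lemma star_int_pow_left_second_star_center:
  assumes b: "b \<in> second_star_center" and y: "y \<in> carrier G"
  shows "(b [^]\<^bsub>G\<^esub> (n::int)) \<star> y = (b \<star> y) [^]\<^bsub>G\<^esub> n"
proof -
  let ?Z2 = "G\<lparr>carrier := second_star_center\<rparr>"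
  have "(\<lambda>b. b \<star> y) \<in> hom ?Z2 G"
    using y by (auto simp: hom_def star_add_left_second_star_center second_star_center_carrier)
  then have "(b [^]\<^bsub>?Z2\<^esub> n) \<star> y = (b \<star> y) [^]\<^bsub>G\<^esub> n"
    using hom_int_pow[of "\<lambda>b. b \<star> y" ?Z2 G b n] b
      G.subgroup_imp_group[OF subgroup_second_star_center] G.is_group
    by simp
  then show ?thesis
    using G.int_pow_consistent[OF subgroup_second_star_center b] by simp
qed

definition cyclic_plus :: "'a \<Rightarrow> 'a set \<Rightarrow> 'a set" where
  "cyclic_plus a C = {a [^]\<^bsub>G\<^esub> (n::int) \<oplus> u | n u. u \<in> C}"

lemma subset_cyclic_plus: "C \<subseteq> carrier G \<Longrightarrow> C \<subseteq> cyclic_plus a C"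
proof
  fix u assume "C \<subseteq> carrier G" "u \<in> C"
  then have "u = a [^]\<^bsub>G\<^esub> (0::int) \<oplus> u"
    by auto
  with \<open>u \<in> C\<close> show "u \<in> cyclic_plus a C"
    unfolding cyclic_plus_def by blast
qed

context
  fixes a assumes a: "a \<in> second_star_center"
begin

declare second_star_center_carrier[OF a, simp]

lemma star_int_pow_int_pow:
  "(a [^]\<^bsub>G\<^esub> (n::int)) \<star> (a [^]\<^bsub>G\<^esub> (m::int)) = (a \<star> a) [^]\<^bsub>G\<^esub> (n * m)"
  using star_int_pow_left_second_star_center[OF a, of "a [^]\<^bsub>G\<^esub> m" n]
  by (simp add: star_int_pow_right G.int_pow_pow mult.commute)

lemma star_cyclic_plus_right:
  "\<lbrakk>u \<in> star_center; y \<in> carrier G\<rbrakk> \<Longrightarrow> y \<star> (a [^]\<^bsub>G\<^esub> (n::int) \<oplus> u) = (y \<star> a) [^]\<^bsub>G\<^esub> n"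
  using star_center_carrier by (simp add: star_add_right star_int_pow_right)

lemma star_cyclic_plus_left:
  "\<lbrakk>u \<in> star_center; y \<in> carrier G\<rbrakk> \<Longrightarrow> (a [^]\<^bsub>G\<^esub> (n::int) \<oplus> u) \<star> y = (a \<star> y) [^]\<^bsub>G\<^esub> n"
  by (simp add: star_add_star_center star_int_pow_left_second_star_center[OF a])

lemma mult_cyclic_plus:
  assumes u: "u \<in> star_center" and v: "v \<in> star_center"
  shows "(a [^]\<^bsub>G\<^esub> (n::int) \<oplus> u) \<odot> (a [^]\<^bsub>G\<^esub> (m::int) \<oplus> v)
    = a [^]\<^bsub>G\<^esub> (n + m) \<oplus> ((a \<star> a) [^]\<^bsub>G\<^esub> (n * m) \<oplus> u \<oplus> v)"
proof -
  note uG = star_center_carrier[OF u] and vG = star_center_carrier[OF v]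
  have "(a [^]\<^bsub>G\<^esub> n \<oplus> u) \<odot> (a [^]\<^bsub>G\<^esub> m \<oplus> v) = a [^]\<^bsub>G\<^esub> n \<odot> a [^]\<^bsub>G\<^esub> m \<oplus> u \<oplus> v"
    using u v uG vG by (simp add: add_star_center_mult mult_add_star_center)
  also have "a [^]\<^bsub>G\<^esub> n \<odot> a [^]\<^bsub>G\<^esub> m
      = (a \<star> a) [^]\<^bsub>G\<^esub> (n * m) \<oplus> a [^]\<^bsub>G\<^esub> n \<oplus> a [^]\<^bsub>G\<^esub> m"
    by (simp add: mult_eq_star_add star_int_pow_int_pow)
  finally show ?thesis
    using uG vG by (simp add: G.int_pow_mult G.m_ac)
qed

lemma subgroup_cyclic_plus:
  assumes C: "subgroup C G" "C \<subseteq> star_center"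
  shows "subgroup (cyclic_plus a C) G"
proof (rule G.subgroupI)
  show "cyclic_plus a C \<subseteq> carrier G"
    using C star_center_carrier by (auto simp: cyclic_plus_def)
  have "a [^]\<^bsub>G\<^esub> (0::int) \<oplus> \<zero> \<in> cyclic_plus a C"
    unfolding cyclic_plus_def using subgroup.one_closed[OF C(1)] by blast
  then show "cyclic_plus a C \<noteq> {}"
    by blast
next
  fix x assume "x \<in> cyclic_plus a C"
  then obtain n u where x: "x = a [^]\<^bsub>G\<^esub> (n::int) \<oplus> u" and u: "u \<in> C"
    unfolding cyclic_plus_def by blast
  have "\<ominus> x = a [^]\<^bsub>G\<^esub> (- n) \<oplus> \<ominus> u"
    using x subgroup.mem_carrier[OF C(1) u] by (simp add: G.inv_mult G.int_pow_neg G.m_comm)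
  then show "\<ominus> x \<in> cyclic_plus a C"
    unfolding cyclic_plus_def using subgroup.m_inv_closed[OF C(1) u] by blast
next
  fix x y assume "x \<in> cyclic_plus a C" "y \<in> cyclic_plus a C"
  then obtain n u m v where x: "x = a [^]\<^bsub>G\<^esub> (n::int) \<oplus> u" and u: "u \<in> C"
    and y: "y = a [^]\<^bsub>G\<^esub> (m::int) \<oplus> v" and v: "v \<in> C"
    unfolding cyclic_plus_def by blast
  have "x \<oplus> y = a [^]\<^bsub>G\<^esub> (n + m) \<oplus> (u \<oplus> v)"
    using x y subgroup.mem_carrier[OF C(1)] u v by (simp add: G.int_pow_mult G.m_ac)
  then show "x \<oplus> y \<in> cyclic_plus a C"
    unfolding cyclic_plus_def using subgroup.m_closed[OF C(1) u v] by blast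
qed

lemma subgroup_mult_cyclic_plus:
  assumes C: "subgroup C G" "C \<subseteq> star_center" and aa: "a \<star> a \<in> C"
  shows "subgroup (cyclic_plus a C) M"
proof (rule M.subgroupI)
  show "cyclic_plus a C \<subseteq> carrier M"
    using subgroup.subset[OF subgroup_cyclic_plus[OF C]] by simp
  show "cyclic_plus a C \<noteq> {}"
    using subgroup.one_closed[OF subgroup_cyclic_plus[OF C]] by blast
next
  have power_C: "(a \<star> a) [^]\<^bsub>G\<^esub> (k::int) \<in> C" for k
    using G.subgroup_int_pow_closed[OF C(1) aa] .
  fix x assume "x \<in> cyclic_plus a C"
  then obtain n u where x: "x = a [^]\<^bsub>G\<^esub> (n::int) \<oplus> u" and u: "u \<in> C"
    unfolding cyclic_plus_def by blast
  define w where "w = (a \<star> a) [^]\<^bsub>G\<^esub> (- n * n) \<oplus> u"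
  have wC: "w \<in> C"
    unfolding w_def using subgroup.m_closed[OF C(1) power_C u] .
  note uG = star_center_carrier[OF subsetD[OF C(2) u]]
  have "(a [^]\<^bsub>G\<^esub> (- n) \<oplus> \<ominus> w) \<odot> x
      = a [^]\<^bsub>G\<^esub> (- n + n) \<oplus> ((a \<star> a) [^]\<^bsub>G\<^esub> (- n * n) \<oplus> \<ominus> w \<oplus> u)"
    unfolding x using C subgroup.m_inv_closed[OF C(1) wC] u
    by (intro mult_cyclic_plus) auto
  also have "\<dots> = a [^]\<^bsub>G\<^esub> (- n + n) \<oplus> (((a \<star> a) [^]\<^bsub>G\<^esub> (- n * n) \<oplus> u) \<oplus> \<ominus> w)"
    using uG star_center_carrier[OF subsetD[OF C(2) wC]] by (simp add: G.m_ac)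
  also have "\<dots> = \<zero>"
    using uG by (simp add: w_def)
  finally have "inv\<^bsub>M\<^esub> x = a [^]\<^bsub>G\<^esub> (- n) \<oplus> \<ominus> w"
    using x uG star_center_carrier[OF subsetD[OF C(2) wC]] by (intro M.inv_equality) simp_all
  then show "inv\<^bsub>M\<^esub> x \<in> cyclic_plus a C"
    unfolding cyclic_plus_def using subgroup.m_inv_closed[OF C(1) wC] by blast
next
  fix x y assume "x \<in> cyclic_plus a C" "y \<in> cyclic_plus a C"
  then obtain n u m v where x: "x = a [^]\<^bsub>G\<^esub> (n::int) \<oplus> u" and u: "u \<in> C"
    and y: "y = a [^]\<^bsub>G\<^esub> (m::int) \<oplus> v" and v: "v \<in> C"
    unfolding cyclic_plus_def by blast
  have "x \<odot> y = a [^]\<^bsub>G\<^esub> (n + m) \<oplus> ((a \<star> a) [^]\<^bsub>G\<^esub> (n * m) \<oplus> u \<oplus> v)"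
    using x y u v C by (auto intro: mult_cyclic_plus)
  moreover have "(a \<star> a) [^]\<^bsub>G\<^esub> (n * m) \<oplus> u \<oplus> v \<in> C"
    using G.subgroup_int_pow_closed[OF C(1) aa] u v subgroup.m_closed[OF C(1)] by blast
  ultimately show "x \<odot> y \<in> cyclic_plus a C"
    unfolding cyclic_plus_def by blast
qed

lemma subbrace_cyclic_plus:
  "\<lbrakk>subgroup C G; C \<subseteq> star_center; a \<star> a \<in> C\<rbrakk> \<Longrightarrow> subbrace G M (cyclic_plus a C)"
  by (simp add: subbrace_def subgroup_cyclic_plus subgroup_mult_cyclic_plus)

lemma brace_ideal_cyclic_plus_star_center: "brace_ideal G M (cyclic_plus a star_center)"
  unfolding brace_ideal_def ideal_of_def
proof (intro conjI ballI)
  show "subbrace G M (cyclic_plus a star_center)"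
    using subgroup_star_center second_star_center_star(1)[OF a, of a]
    by (intro subbrace_cyclic_plus) auto
  then show "cyclic_plus a star_center \<subseteq> carrier G"
    by (simp add: subbrace_def subgroup.subset)
next
  fix y x assume y: "y \<in> carrier G" and "x \<in> cyclic_plus a star_center"
  then obtain n u where x: "x = a [^]\<^bsub>G\<^esub> (n::int) \<oplus> u" and u: "u \<in> star_center"
    unfolding cyclic_plus_def by blast
  have "star_center \<subseteq> cyclic_plus a star_center"
    using subgroup.subset[OF subgroup_star_center] by (rule subset_cyclic_plus)
  moreover have "(y \<star> a) [^]\<^bsub>G\<^esub> n \<in> star_center" "(a \<star> y) [^]\<^bsub>G\<^esub> n \<in> star_center"
    using second_star_center_star[OF a] y G.subgroup_int_pow_closed[OF subgroup_star_center] by auto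
  ultimately show "y \<star> x \<in> cyclic_plus a star_center" "x \<star> y \<in> cyclic_plus a star_center"
    using x u y by (auto simp: star_cyclic_plus_right star_cyclic_plus_left)
qed

lemma ideal_of_cyclic_plus_generate:
  "ideal_of G M (cyclic_plus a star_center) (cyclic_plus a (generate G {a \<star> a}))"
proof -
  have aa: "a \<star> a \<in> star_center"
    using second_star_center_star(1)[OF a, of a] by simp
  have gen_subgroup: "subgroup (generate G {a \<star> a}) G"
    using G.generate_is_subgroup star_center_carrier[OF aa] by simp
  have gen_center: "generate G {a \<star> a} \<subseteq> star_center"
    using G.generate_subgroup_incl[OF _ subgroup_star_center] aa by blast
  have gen: "generate G {a \<star> a} = {(a \<star> a) [^]\<^bsub>G\<^esub> (k::int) | k. k \<in> UNIV}"
    using G.generate_pow star_center_carrier[OF aa] by blast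
  have "subbrace G M (cyclic_plus a (generate G {a \<star> a}))"
    using gen_subgroup gen_center generate.incl[of "a \<star> a"] by (intro subbrace_cyclic_plus) auto
  moreover have "cyclic_plus a (generate G {a \<star> a}) \<subseteq> cyclic_plus a star_center"
    using gen_center unfolding cyclic_plus_def by blast
  moreover have "y \<star> x \<in> cyclic_plus a (generate G {a \<star> a})
      \<and> x \<star> y \<in> cyclic_plus a (generate G {a \<star> a})"
    if yJ: "y \<in> cyclic_plus a star_center"
      and xI: "x \<in> cyclic_plus a (generate G {a \<star> a})" for x y
  proof -
    obtain k u n v where y: "y = a [^]\<^bsub>G\<^esub> (k::int) \<oplus> u" and u: "u \<in> star_center"
      and x: "x = a [^]\<^bsub>G\<^esub> (n::int) \<oplus> v" and v: "v \<in> generate G {a \<star> a}"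
      using yJ xI unfolding cyclic_plus_def by blast
    note uG = star_center_carrier[OF u] and vZ = subsetD[OF gen_center v]
    have "y \<star> a = (a \<star> a) [^]\<^bsub>G\<^esub> k" "a \<star> y = (a \<star> a) [^]\<^bsub>G\<^esub> k"
      using y u by (simp_all add: star_cyclic_plus_left star_cyclic_plus_right)
    then have "y \<star> x = (a \<star> a) [^]\<^bsub>G\<^esub> (k * n)" "x \<star> y = (a \<star> a) [^]\<^bsub>G\<^esub> (k * n)"
      using x y uG vZ star_center_carrier[OF aa]
      by (simp_all add: star_cyclic_plus_left star_cyclic_plus_right G.int_pow_pow)
    moreover have "(a \<star> a) [^]\<^bsub>G\<^esub> (k * n) \<in> cyclic_plus a (generate G {a \<star> a})"
      using subset_cyclic_plus[OF subgroup.subset[OF gen_subgroup]] gen by blast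
    ultimately show ?thesis
      by simp
  qed
  ultimately show ?thesis
    unfolding ideal_of_def by blast
qed

end

lemma star_mem_cyclic_plus_generate:
  assumes T: "T_brace G M" and a: "a \<in> second_star_center" and y: "y \<in> carrier G"
  shows "y \<star> a \<in> cyclic_plus a (generate G {a \<star> a})"
    and "a \<star> y \<in> cyclic_plus a (generate G {a \<star> a})"
proof -
  have "brace_ideal G M (cyclic_plus a (generate G {a \<star> a}))"
    using T ideal_of_cyclic_plus_generate[OF a] brace_ideal_cyclic_plus_star_center[OF a]
    unfolding T_brace_def by blast
  moreover have "a \<in> cyclic_plus a (generate G {a \<star> a})"
    using second_star_center_carrier[OF a] generate.one[of G "{a \<star> a}"] unfolding cyclic_plus_def
    by (auto intro!: exI[of _ 1] exI[of _ \<zero>])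
  ultimately show "y \<star> a \<in> cyclic_plus a (generate G {a \<star> a})"
    and "a \<star> y \<in> cyclic_plus a (generate G {a \<star> a})"
    using y unfolding brace_ideal_def ideal_of_def by auto
qed

lemma cyclic_plus_inter_star_center:
  assumes a: "a \<in> carrier G" and no_power: "\<And>k. a [^]\<^bsub>G\<^esub> (k::int) \<in> star_center \<Longrightarrow> k = 0"
    and C: "C \<subseteq> star_center" and x: "x \<in> cyclic_plus a C" "x \<in> star_center"
  shows "x \<in> C"
proof -
  obtain n u where xnu: "x = a [^]\<^bsub>G\<^esub> (n::int) \<oplus> u" and u: "u \<in> C"
    using x(1) unfolding cyclic_plus_def by blast
  have uZ: "u \<in> star_center"
    using C u by blast
  have "a [^]\<^bsub>G\<^esub> n = x \<oplus> \<ominus> u"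
    using xnu star_center_carrier[OF uZ] a by (simp add: G.m_assoc)
  also have "\<dots> \<in> star_center"
    using subgroup.m_closed[OF subgroup_star_center x(2) subgroup.m_inv_closed[OF subgroup_star_center uZ]] .
  finally have "n = 0"
    by (rule no_power)
  then show ?thesis
    using xnu u star_center_carrier[OF uZ] by simp
qed

lemma star_center_if_int_pow_star_center:
  assumes tf: "torsion_free_add G" and a: "a \<in> second_star_center"
    and k: "k \<noteq> 0" and ak: "a [^]\<^bsub>G\<^esub> (k::int) \<in> star_center"
  shows "a \<in> star_center"
proof (rule star_centerI)
  show aG: "a \<in> carrier G"
    using second_star_center_carrier[OF a] .
  fix x assume x: "x \<in> carrier G"
  have "(x \<star> a) [^]\<^bsub>G\<^esub> k = \<zero>" "(a \<star> x) [^]\<^bsub>G\<^esub> k = \<zero>"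
    using ak aG x star_int_pow_right[of x a k] star_int_pow_left_second_star_center[OF a x, of k]
    by simp_all
  then show "a \<star> x = \<zero> \<and> x \<star> a = \<zero>"
    using torsion_free_int_pow_eq_one[OF G.is_group tf _ k] aG x by simp
qed

lemma star_center_if_no_int_pow_star_center:
  assumes T: "T_brace G M" and tf: "torsion_free_add G" and a: "a \<in> second_star_center"
    and no_power: "\<And>k. a [^]\<^bsub>G\<^esub> (k::int) \<in> star_center \<Longrightarrow> k = 0"
  shows "a \<in> star_center"
proof -
  note aG = second_star_center_carrier[OF a]
  define b where "b = a [^]\<^bsub>G\<^esub> (2::int)"
  have b: "b \<in> second_star_center"
    unfolding b_def using G.subgroup_int_pow_closed[OF subgroup_second_star_center a] .
  have b_no_power: "k = 0" if "b [^]\<^bsub>G\<^esub> (k::int) \<in> star_center" for k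
    using no_power[of "2 * k"] that aG by (simp add: b_def G.int_pow_pow)
  have "a \<star> b \<in> cyclic_plus b (generate G {b \<star> b})"
    using star_mem_cyclic_plus_generate(1)[OF T b aG] .
  moreover have "a \<star> b \<in> star_center"
    using second_star_center_star(1)[OF a second_star_center_carrier[OF b]] .
  moreover have "generate G {b \<star> b} \<subseteq> star_center"
    using G.generate_subgroup_incl[OF _ subgroup_star_center]
      second_star_center_star(1)[OF b second_star_center_carrier[OF b]]
    by blast
  ultimately have "a \<star> b \<in> generate G {b \<star> b}"
    using cyclic_plus_inter_star_center[OF second_star_center_carrier[OF b] b_no_power] by blast
  moreover have "a \<star> b = (a \<star> a) [^]\<^bsub>G\<^esub> (2::int)" "b \<star> b = (a \<star> a) [^]\<^bsub>G\<^esub> (4::int)"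
    using star_int_pow_right[OF aG aG] star_int_pow_int_pow[OF a, of 2 2] by (simp_all add: b_def)
  ultimately obtain m :: int where "(a \<star> a) [^]\<^bsub>G\<^esub> (2::int) = (a \<star> a) [^]\<^bsub>G\<^esub> (4 * m)"
    using G.generate_pow[of "b \<star> b"] aG by (auto simp: G.int_pow_pow)
  then have "(a \<star> a) [^]\<^bsub>G\<^esub> (2 - 4 * m) = \<zero>"
    using aG by (simp add: G.int_pow_diff)
  moreover have "2 - 4 * m \<noteq> 0"
    by presburger
  ultimately have aa: "a \<star> a = \<zero>"
    using torsion_free_int_pow_eq_one[OF G.is_group tf, of "a \<star> a" "2 - 4 * m"] aG by simp
  show ?thesis
  proof (rule star_centerI)
    fix x assume x: "x \<in> carrier G"
    have "generate G {a \<star> a} = {\<zero>}"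
      using aa G.generate_one by simp
    then show "a \<star> x = \<zero> \<and> x \<star> a = \<zero>"
      using cyclic_plus_inter_star_center[OF aG no_power, of "{\<zero>}"]
        star_mem_cyclic_plus_generate[OF T a x] second_star_center_star[OF a] x
        subgroup.one_closed[OF subgroup_star_center]
      by auto
  qed (rule aG)
qed

lemma second_star_center_subset:
  assumes "T_brace G M" and "torsion_free_add G"
  shows "second_star_center \<subseteq> star_center"
proof
  fix a assume a: "a \<in> second_star_center"
  show "a \<in> star_center"
  proof (cases "\<exists>k::int. k \<noteq> 0 \<and> a [^]\<^bsub>G\<^esub> k \<in> star_center")
    case True
    then show ?thesis
      using star_center_if_int_pow_star_center[OF assms(2) a] by blast
  next
    case False
    then show ?thesis
      using star_center_if_no_int_pow_star_center[OF assms a] by blast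
  qed
qed

lemma zeta_inf_subset_star_center:
  assumes "T_brace G M" and "torsion_free_add G"
  shows "zeta_inf G M \<subseteq> star_center"
proof
  fix a assume "a \<in> zeta_inf G M"
  then show "a \<in> star_center"
  proof (induction rule: zeta_inf.induct)
    case zero
    show ?case
      using subgroup.one_closed[OF subgroup_star_center] by simp
  next
    case (step a)
    then have "a \<in> second_star_center"
      unfolding second_star_center_def by blast
    then show ?case
      using second_star_center_subset[OF assms] by blast
  qed
qed

end

theorem corollary1:
  fixes G M :: "'a monoid"
  assumes "T_brace G M"
    and "torsion_free_add G"
    and "star_hypercentral G M"
  shows "\<forall>a\<in>carrier G. \<forall>b\<in>carrier G. star G M a b = \<one>\<^bsub>G\<^esub>"
proof -
  interpret left_brace G M
    using assms(1) by (simp add: left_brace_def T_brace_def)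
  have "carrier G \<subseteq> star_center"
    using zeta_inf_subset_star_center[OF assms(1,2)] assms(3)
    unfolding star_hypercentral_def by simp
  then show ?thesis
    using star_center_star(1) by blast
qed

end
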